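(* There is an isomorphism of $\mathbb C$-vector spaces $\mathrm{Hom}_{\mathcal D}(\mathcal W,\mathbb C[[\lambda]])\cong\mathrm{Hom}_{\mathbb C}(\mathcal W_0,\mathbb C)$.
   Context: Let $A=\{\mathbf a_1,\dots,\mathbf a_m\}\subseteq\mathbb Z^n$ be linearly independent over $\mathbb R$, $\mathbf a_0\in\mathbb Z^n$, and $\ell_0,\dots,\ell_m$ positive integers with gcd $1$, $\ell_0\mathbf a_0=\sum_{j=1}^m\ell_j\mathbf a_j$, $\ell_0=\sum_{j=1}^m\ell_j$. Let $f_\lambda=\sum_{j=1}^m\ell_jx^{\mathbf a_j}-\ell_0\lambda x^{\mathbf a_0}$ and $f_0=\sum_{j=1}^m\ell_jx^{\mathbf a_j}$. Let $V$ be the real span of $A$, $V_{\mathbb Z}=V\cap\mathbb Z^n$, $C(A)$ the real cone generated by $A$, $M=V_{\mathbb Z}\cap C(A)$. Let $S$ (resp. $S_0$) be the $\mathbb C[\lambda]$-span (resp. $\mathbb C$-span) of $\{x^u:u\in M\}$ in $\mathbb C[\lambda][x_1^{\pm1},\dots,x_n^{\pm1}]$. Let $D_i=x_i\partial/\partial x_i+x_i\partial f_\lambda/\partial x_i$ on $S$, $D_{i,0}=x_i\partial/\partial x_i+x_i\partial f_0/\partial x_i$ on $S_0$ ($i=1,\dots,n$), and $D_\lambda=\partial/\partial\lambda-\ell_0x^{\mathbf a_0}$ on $S$. Let $\mathcal D=\mathbb C[\lambda]\langle\partial_\lambda\rangle$; $\mathcal W=S/\sum_iD_iS$ is a left $\mathcal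 D$-module with $\partial_\lambda$ acting as $D_\lambda$, and $\mathbb C[[\lambda]]$ is a left $\mathcal D$-module via $d/d\lambda$. Let $\mathcal W_0=S_0/\sum_iD_{i,0}S_0$. *)

theory Defs
  imports Main "HOL-Computational_Algebra.Polynomial" "HOL-Computational_Algebra.Polynomial_FPS"
begin

text \<open>Exponent vectors in Z^n are functions 'n => int with 'n a finite type (n = CARD('n)).
  The data A = {a 1, ..., a m}, a 0 and l 0, ..., l m are given as families indexed by nat.
  A Laurent polynomial is represented by its coefficient function (finite support).\<close>

definition lattice_cone :: "(nat \<Rightarrow> 'n::finite \<Rightarrow> int) \<Rightarrow> nat \<Rightarrow> ('n \<Rightarrow> int) set" where
  "lattice_cone a m = {u. \<exists>c::nat \<Rightarrow> real. (\<forall>j\<in>{1..m}. c j \<ge> 0) \<and>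
      (\<forall>i. real_of_int (u i) = (\<Sum>j=1..m. c j * real_of_int (a j i)))}"

definition S_space :: "(nat \<Rightarrow> 'n::finite \<Rightarrow> int) \<Rightarrow> nat \<Rightarrow> (('n \<Rightarrow> int) \<Rightarrow> complex poly) set" where
  "S_space a m = {g. finite {u. g u \<noteq> 0} \<and> {u. g u \<noteq> 0} \<subseteq> lattice_cone a m}"

definition S0_space :: "(nat \<Rightarrow> 'n::finite \<Rightarrow> int) \<Rightarrow> nat \<Rightarrow> (('n \<Rightarrow> int) \<Rightarrow> complex) set" where
  "S0_space a m = {g. finite {u. g u \<noteq> 0} \<and> {u. g u \<noteq> 0} \<subseteq> lattice_cone a m}"

text \<open>D_i = x_i d/dx_i + x_i (d f_lambda / d x_i), with
  f_lambda = sum_{j=1..m} l_j x^{a_j} - l_0 lambda x^{a_0}.\<close>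
definition D_op :: "(nat \<Rightarrow> 'n::finite \<Rightarrow> int) \<Rightarrow> (nat \<Rightarrow> nat) \<Rightarrow> nat \<Rightarrow> 'n
    \<Rightarrow> (('n \<Rightarrow> int) \<Rightarrow> complex poly) \<Rightarrow> (('n \<Rightarrow> int) \<Rightarrow> complex poly)" where
  "D_op a l m i g = (\<lambda>u. of_int (u i) * g u
      + (\<Sum>j=1..m. of_nat (l j) * of_int (a j i) * g (\<lambda>k. u k - a j k))
      - of_nat (l 0) * of_int (a 0 i) * [:0, 1:] * g (\<lambda>k. u k - a 0 k))"

text \<open>D_{i,0} = x_i d/dx_i + x_i (d f_0 / d x_i), f_0 = sum_{j=1..m} l_j x^{a_j}.\<close>
definition D0_op :: "(nat \<Rightarrow> 'n::finite \<Rightarrow> int) \<Rightarrow> (nat \<Rightarrow> nat) \<Rightarrow> nat \<Rightarrow> 'n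
    \<Rightarrow> (('n \<Rightarrow> int) \<Rightarrow> complex) \<Rightarrow> (('n \<Rightarrow> int) \<Rightarrow> complex)" where
  "D0_op a l m i g = (\<lambda>u. of_int (u i) * g u
      + (\<Sum>j=1..m. of_nat (l j) * of_int (a j i) * g (\<lambda>k. u k - a j k)))"

text \<open>D_lambda = d/dlambda - l_0 x^{a_0}.\<close>
definition Dlam_op :: "(nat \<Rightarrow> 'n::finite \<Rightarrow> int) \<Rightarrow> (nat \<Rightarrow> nat)
    \<Rightarrow> (('n \<Rightarrow> int) \<Rightarrow> complex poly) \<Rightarrow> (('n \<Rightarrow> int) \<Rightarrow> complex poly)" where
  "Dlam_op a l g = (\<lambda>u. pderiv (g u) - of_nat (l 0) * g (\<lambda>k. u k - a 0 k))"

text \<open>Hom_D(W, C[[lambda]]), W = S / sum_i D_i S: represented (universal property of the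
  quotient) as the C[lambda]-linear maps S -> C[[lambda]] vanishing on every D_i S and
  intertwining D_lambda with d/dlambda; normalised to be 0 outside S.\<close>
definition HomD :: "(nat \<Rightarrow> 'n::finite \<Rightarrow> int) \<Rightarrow> (nat \<Rightarrow> nat) \<Rightarrow> nat
    \<Rightarrow> ((('n \<Rightarrow> int) \<Rightarrow> complex poly) \<Rightarrow> complex fps) set" where
  "HomD a l m = {\<phi>.
      (\<forall>g. g \<notin> S_space a m \<longrightarrow> \<phi> g = 0) \<and>
      (\<forall>g\<in>S_space a m. \<forall>h\<in>S_space a m. \<phi> (\<lambda>u. g u + h u) = \<phi> g + \<phi> h) \<and>
      (\<forall>p. \<forall>g\<in>S_space a m. \<phi> (\<lambda>u. p * g u) = fps_of_poly p * \<phi> g) \<and>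
      (\<forall>i. \<forall>g\<in>S_space a m. \<phi> (D_op a l m i g) = 0) \<and>
      (\<forall>g\<in>S_space a m. \<phi> (Dlam_op a l g) = fps_deriv (\<phi> g))}"

text \<open>Hom_C(W_0, C), W_0 = S_0 / sum_i D_{i,0} S_0: C-linear maps S_0 -> C vanishing on
  every D_{i,0} S_0; normalised to be 0 outside S_0.\<close>
definition HomC0 :: "(nat \<Rightarrow> 'n::finite \<Rightarrow> int) \<Rightarrow> (nat \<Rightarrow> nat) \<Rightarrow> nat
    \<Rightarrow> ((('n \<Rightarrow> int) \<Rightarrow> complex) \<Rightarrow> complex) set" where
  "HomC0 a l m = {\<psi>.
      (\<forall>g. g \<notin> S0_space a m \<longrightarrow> \<psi> g = 0) \<and>
      (\<forall>g\<in>S0_space a m. \<forall>h\<in>S0_space a m. \<psi> (\<lambda>u. g u + h u) = \<psi> g + \<psi> h) \<and>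
      (\<forall>c. \<forall>g\<in>S0_space a m. \<psi> (\<lambda>u. c * g u) = c * \<psi> g) \<and>
      (\<forall>i. \<forall>g\<in>S0_space a m. \<psi> (D0_op a l m i g) = 0)}"

end

(* A D-linear map phi : S -> C[[lambda]] satisfies phi (D_lambda^k g) = phi(g)^(k), so the k-th
   coefficient of phi g is the constant term of phi (D_lambda^k g) divided by k!; and
   phi (lambda h) = lambda * phi h shows that the constant term of phi h only depends on h at
   lambda = 0. Hence phi is the Taylor series  sum_k psi ((D_lambda^k g)|lambda=0) lambda^k / k!
   of the restriction psi of phi to S_0. Conversely, for every psi killing the D_{i,0} S_0 this
   Taylor series is a D-linear map killing the D_i S: D_lambda commutes with every D_i, and the
   Leibniz rule D_lambda^(k+1) (lambda g) = lambda D_lambda^(k+1) g + (k+1) D_lambda^k g gives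
   C[lambda]-linearity. *)
theory Submission
  imports Defs
begin

definition finsupp_on :: "'a set \<Rightarrow> ('a \<Rightarrow> 'b::zero) set" where
  "finsupp_on C = {g. finite {u. g u \<noteq> 0} \<and> {u. g u \<noteq> 0} \<subseteq> C}"

lemma S_space_eq: "S_space a m = finsupp_on (lattice_cone a m)"
  by (simp add: S_space_def finsupp_on_def)

lemma S0_space_eq: "S0_space a m = finsupp_on (lattice_cone a m)"
  by (simp add: S0_space_def finsupp_on_def)

lemma finsupp_onI:
  assumes "finite A" "A \<subseteq> C" "{u. h u \<noteq> 0} \<subseteq> A"
  shows "h \<in> finsupp_on C"
  using assms finite_subset unfolding finsupp_on_def by blast

lemma finsupp_on_zero: "(\<lambda>u. 0) \<in> finsupp_on C"
  by (simp add: finsupp_on_def)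

lemma finsupp_on_vanishing:
  assumes "g \<in> finsupp_on C" "\<And>u. g u = 0 \<Longrightarrow> h u = 0"
  shows "h \<in> finsupp_on C"
  by (rule finsupp_onI[of "{u. g u \<noteq> 0}"]) (use assms in \<open>auto simp: finsupp_on_def\<close>)

lemma finsupp_on_map:
  "g \<in> finsupp_on C \<Longrightarrow> f 0 = 0 \<Longrightarrow> (\<lambda>u. f (g u)) \<in> finsupp_on C"
  by (erule finsupp_on_vanishing) simp

lemma finsupp_on_map_iff:
  assumes "\<And>x. f x = 0 \<longleftrightarrow> x = 0"
  shows "(\<lambda>u. f (g u)) \<in> finsupp_on C \<longleftrightarrow> g \<in> finsupp_on C"
  using assms by (simp add: finsupp_on_def)

lemma finsupp_on_mult_left:
  fixes g :: "'a \<Rightarrow> 'b::mult_zero"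
  shows "g \<in> finsupp_on C \<Longrightarrow> (\<lambda>u. c u * g u) \<in> finsupp_on C"
  by (erule finsupp_on_vanishing) simp

lemma finsupp_on_add:
  fixes g h :: "'a \<Rightarrow> 'b::monoid_add"
  assumes "g \<in> finsupp_on C" "h \<in> finsupp_on C"
  shows "(\<lambda>u. g u + h u) \<in> finsupp_on C"
  by (rule finsupp_onI[of "{u. g u \<noteq> 0} \<union> {u. h u \<noteq> 0}"])
    (use assms in \<open>auto simp: finsupp_on_def\<close>)

lemma finsupp_on_diff:
  fixes g h :: "'a \<Rightarrow> 'b::group_add"
  assumes "g \<in> finsupp_on C" "h \<in> finsupp_on C"
  shows "(\<lambda>u. g u - h u) \<in> finsupp_on C"
  by (rule finsupp_onI[of "{u. g u \<noteq> 0} \<union> {u. h u \<noteq> 0}"])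
    (use assms in \<open>auto simp: finsupp_on_def\<close>)

lemma finsupp_on_sum:
  fixes g :: "'j \<Rightarrow> 'a \<Rightarrow> 'b::comm_monoid_add"
  shows "(\<And>j. j \<in> J \<Longrightarrow> g j \<in> finsupp_on C) \<Longrightarrow> (\<lambda>u. \<Sum>j\<in>J. g j u) \<in> finsupp_on C"
  by (induction J rule: infinite_finite_induct) (simp_all add: finsupp_on_zero finsupp_on_add)

lemma finsupp_on_shift:
  fixes g :: "('n \<Rightarrow> int) \<Rightarrow> 'b::zero"
  assumes "g \<in> finsupp_on C" "\<And>u. u \<in> C \<Longrightarrow> (\<lambda>k. u k + v k) \<in> C"
  shows "(\<lambda>u. g (\<lambda>k. u k - v k)) \<in> finsupp_on C"
proof (rule finsupp_onI)
  let ?shift = "\<lambda>w k. w k + v k"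
  show "{u. g (\<lambda>k. u k - v k) \<noteq> 0} \<subseteq> ?shift ` {u. g u \<noteq> 0}"
    by (auto intro!: image_eqI[where x = "\<lambda>k. _ k - v k"])
  show "finite (?shift ` {u. g u \<noteq> 0})" "?shift ` {u. g u \<noteq> 0} \<subseteq> C"
    using assms by (auto simp: finsupp_on_def)
qed

lemma lattice_cone_add:
  assumes "u \<in> lattice_cone a m" "v \<in> lattice_cone a m"
  shows "(\<lambda>k. u k + v k) \<in> lattice_cone a m"
proof -
  obtain c d where "\<forall>j\<in>{1..m}. c j \<ge> 0" "\<forall>j\<in>{1..m}. d j \<ge> 0"
    and "\<forall>i. real_of_int (u i) = (\<Sum>j=1..m. c j * real_of_int (a j i))"
    and "\<forall>i. real_of_int (v i) = (\<Sum>j=1..m. d j * real_of_int (a j i))"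
    using assms unfolding lattice_cone_def by blast
  then show ?thesis
    unfolding lattice_cone_def
    by (intro CollectI exI[of _ "\<lambda>j. c j + d j"]) (simp add: distrib_right sum.distrib)
qed

lemma generator_in_lattice_cone:
  assumes "j \<in> {1..m}"
  shows "a j \<in> lattice_cone a m"
  unfolding lattice_cone_def
  using assms by (intro CollectI exI[of _ "\<lambda>k. of_bool (k = j)"]) (simp add: sum.delta)

lemma a0_in_lattice_cone:
  assumes "0 < l 0" "\<forall>i. int (l 0) * a 0 i = (\<Sum>j=1..m. int (l j) * a j i)"
  shows "a 0 \<in> lattice_cone a m"
  unfolding lattice_cone_def
proof (intro CollectI exI[of _ "\<lambda>j. real (l j) / real (l 0)"] conjI allI ballI)
  fix i
  have "real (l 0) * real_of_int (a 0 i) = (\<Sum>j=1..m. real (l j) * real_of_int (a j i))"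
    using arg_cong[OF assms(2)[rule_format, of i], of real_of_int] by simp
  then show "real_of_int (a 0 i) = (\<Sum>j=1..m. real (l j) / real (l 0) * real_of_int (a j i))"
    using assms(1) by (simp add: sum_divide_distrib[symmetric] field_simps)
qed simp

lemma Dlam_op_D_op_commute: "Dlam_op a l (D_op a l m i g) = D_op a l m i (Dlam_op a l g)"
proof (rule ext)
  fix u
  have pderiv_sum: "pderiv (\<Sum>j\<in>J. p j) = (\<Sum>j\<in>J. pderiv (p j))" for J and p :: "nat \<Rightarrow> complex poly"
    using higher_pderiv_sum[of 1 p J] by simp
  show "Dlam_op a l (D_op a l m i g) u = D_op a l m i (Dlam_op a l g) u"
    unfolding Dlam_op_def D_op_def
    by (simp add: pderiv_sum pderiv_add pderiv_diff pderiv_minus pderiv_mult pderiv_smult pderiv_pCons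
        of_int_poly of_nat_poly sum_subtractf sum_distrib_left smult_add_left smult_diff_left algebra_simps)
qed

lemma Dlam_op_pow_D_op_commute:
  "(Dlam_op a l ^^ k) (D_op a l m i g) = D_op a l m i ((Dlam_op a l ^^ k) g)"
  by (induction k) (simp_all add: Dlam_op_D_op_commute)

lemma Dlam_op_add: "Dlam_op a l (\<lambda>u. g u + h u) = (\<lambda>u. Dlam_op a l g u + Dlam_op a l h u)"
  by (simp add: Dlam_op_def pderiv_add algebra_simps)

lemma Dlam_op_smult: "Dlam_op a l (\<lambda>u. smult c (g u)) = (\<lambda>u. smult c (Dlam_op a l g u))"
  by (simp add: Dlam_op_def pderiv_smult smult_diff_right)

lemma Dlam_op_pCons_0: "Dlam_op a l (\<lambda>u. pCons 0 (g u)) = (\<lambda>u. pCons 0 (Dlam_op a l g u) + g u)"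
  by (rule ext) (simp add: Dlam_op_def pderiv_pCons algebra_simps)

lemma Dlam_op_pow_add:
  "(Dlam_op a l ^^ k) (\<lambda>u. g u + h u) = (\<lambda>u. (Dlam_op a l ^^ k) g u + (Dlam_op a l ^^ k) h u)"
  by (induction k) (simp_all add: Dlam_op_add)

lemma Dlam_op_pow_smult:
  "(Dlam_op a l ^^ k) (\<lambda>u. smult c (g u)) = (\<lambda>u. smult c ((Dlam_op a l ^^ k) g u))"
  by (induction k) (simp_all add: Dlam_op_smult)

lemma Dlam_op_pow_pCons_0:
  "(Dlam_op a l ^^ Suc k) (\<lambda>u. pCons 0 (g u))
     = (\<lambda>u. pCons 0 ((Dlam_op a l ^^ Suc k) g u) + smult (of_nat (Suc k)) ((Dlam_op a l ^^ k) g u))"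
proof (induction k)
  case 0
  show ?case by (simp add: Dlam_op_pCons_0)
next
  case (Suc k)
  let ?D = "\<lambda>k. (Dlam_op a l ^^ k) g"
  have "(Dlam_op a l ^^ Suc (Suc k)) (\<lambda>u. pCons 0 (g u))
      = Dlam_op a l (\<lambda>u. pCons 0 (?D (Suc k) u) + smult (of_nat (Suc k)) (?D k u))"
    using Suc by simp
  also have "\<dots> = (\<lambda>u. pCons 0 (?D (Suc (Suc k)) u) + ?D (Suc k) u + smult (of_nat (Suc k)) (?D (Suc k) u))"
    by (simp add: Dlam_op_add Dlam_op_pCons_0 Dlam_op_smult)
  also have "\<dots> = (\<lambda>u. pCons 0 (?D (Suc (Suc k)) u) + smult (of_nat (Suc (Suc k))) (?D (Suc k) u))"
    by (rule ext) (simp add: poly_eq_iff algebra_simps del: funpow.simps)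
  finally show ?case .
qed

lemma D_op_at_0: "(\<lambda>u. poly (D_op a l m i g u) 0) = D0_op a l m i (\<lambda>u. poly (g u) 0)"
  by (simp add: D_op_def D0_op_def poly_sum)

lemma HomD_D:
  assumes "\<phi> \<in> HomD a l m"
  shows HomD_outside: "g \<notin> S_space a m \<Longrightarrow> \<phi> g = 0"
    and HomD_add: "g \<in> S_space a m \<Longrightarrow> h \<in> S_space a m \<Longrightarrow> \<phi> (\<lambda>u. g u + h u) = \<phi> g + \<phi> h"
    and HomD_mult: "g \<in> S_space a m \<Longrightarrow> \<phi> (\<lambda>u. p * g u) = fps_of_poly p * \<phi> g"
    and HomD_D_op: "g \<in> S_space a m \<Longrightarrow> \<phi> (D_op a l m i g) = 0"
    and HomD_Dlam_op: "g \<in> S_space a m \<Longrightarrow> \<phi> (Dlam_op a l g) = fps_deriv (\<phi> g)"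
  using assms unfolding HomD_def by blast+

lemma HomC0_D:
  assumes "\<psi> \<in> HomC0 a l m"
  shows HomC0_outside: "g \<notin> S0_space a m \<Longrightarrow> \<psi> g = 0"
    and HomC0_add: "g \<in> S0_space a m \<Longrightarrow> h \<in> S0_space a m \<Longrightarrow> \<psi> (\<lambda>u. g u + h u) = \<psi> g + \<psi> h"
    and HomC0_mult: "g \<in> S0_space a m \<Longrightarrow> \<psi> (\<lambda>u. c * g u) = c * \<psi> g"
    and HomC0_D0_op: "g \<in> S0_space a m \<Longrightarrow> \<psi> (D0_op a l m i g) = 0"
  using assms unfolding HomC0_def by blast+

lemma const_poly_in_S_space_iff: "(\<lambda>u. [:g u:]) \<in> S_space a m \<longleftrightarrow> g \<in> S0_space a m"
  unfolding S_space_eq S0_space_eq by (rule finsupp_on_map_iff) simp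

lemma poly_at_0_in_S0_space: "g \<in> S_space a m \<Longrightarrow> (\<lambda>u. poly (g u) 0) \<in> S0_space a m"
  unfolding S_space_eq S0_space_eq by (erule finsupp_on_map) simp

lemma HomC0_zero: "\<psi> \<in> HomC0 a l m \<Longrightarrow> \<psi> (\<lambda>u. 0) = 0"
  using HomC0_mult[of \<psi> a l m "\<lambda>u. 0" 0] by (simp add: S0_space_eq finsupp_on_zero)

definition specialize_hom :: "((('n \<Rightarrow> int) \<Rightarrow> complex poly) \<Rightarrow> complex fps)
    \<Rightarrow> (('n \<Rightarrow> int) \<Rightarrow> complex) \<Rightarrow> complex" where
  "specialize_hom \<phi> g = fps_nth (\<phi> (\<lambda>u. [:g u:])) 0"

definition taylor_series :: "(nat \<Rightarrow> 'n::finite \<Rightarrow> int) \<Rightarrow> (nat \<Rightarrow> nat)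
    \<Rightarrow> ((('n \<Rightarrow> int) \<Rightarrow> complex) \<Rightarrow> complex) \<Rightarrow> (('n \<Rightarrow> int) \<Rightarrow> complex poly) \<Rightarrow> complex fps" where
  "taylor_series a l \<psi> g = Abs_fps (\<lambda>k. \<psi> (\<lambda>u. poly ((Dlam_op a l ^^ k) g u) 0) / fact k)"

definition taylor_hom :: "(nat \<Rightarrow> 'n::finite \<Rightarrow> int) \<Rightarrow> (nat \<Rightarrow> nat) \<Rightarrow> nat
    \<Rightarrow> ((('n \<Rightarrow> int) \<Rightarrow> complex) \<Rightarrow> complex) \<Rightarrow> (('n \<Rightarrow> int) \<Rightarrow> complex poly) \<Rightarrow> complex fps" where
  "taylor_hom a l m \<psi> g = (if g \<in> S_space a m then taylor_series a l \<psi> g else 0)"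

locale twisted_de_Rham =
  fixes a :: "nat \<Rightarrow> 'n::finite \<Rightarrow> int" and l :: "nat \<Rightarrow> nat" and m :: nat
  assumes a0_in_cone: "a 0 \<in> lattice_cone a m"
begin

lemma lattice_cone_shift:
  assumes "j \<in> {0..m}" "u \<in> lattice_cone a m"
  shows "(\<lambda>k. u k + a j k) \<in> lattice_cone a m"
proof -
  have "a j \<in> lattice_cone a m"
    using a0_in_cone generator_in_lattice_cone[of j m a] assms(1) by (cases "j = 0") auto
  with assms(2) show ?thesis by (rule lattice_cone_add)
qed

lemma S_space_shift: "g \<in> S_space a m \<Longrightarrow> j \<in> {0..m} \<Longrightarrow> (\<lambda>u. g (\<lambda>k. u k - a j k)) \<in> S_space a m"
  unfolding S_space_eq by (erule finsupp_on_shift) (rule lattice_cone_shift)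

lemma D_op_in_S_space: "g \<in> S_space a m \<Longrightarrow> D_op a l m i g \<in> S_space a m"
  using S_space_shift[of g] unfolding D_op_def S_space_eq
  by (intro finsupp_on_diff finsupp_on_add finsupp_on_sum finsupp_on_mult_left) auto

lemma Dlam_op_in_S_space:
  assumes "g \<in> S_space a m"
  shows "Dlam_op a l g \<in> S_space a m"
proof -
  have "(\<lambda>u. pderiv (g u)) \<in> finsupp_on (lattice_cone a m)"
    using assms unfolding S_space_eq by (rule finsupp_on_map) simp
  moreover have "(\<lambda>u. of_nat (l 0) * g (\<lambda>k. u k - a 0 k)) \<in> finsupp_on (lattice_cone a m)"
    using S_space_shift[OF assms, of 0] by (simp add: S_space_eq finsupp_on_mult_left)
  ultimately show ?thesis
    unfolding Dlam_op_def S_space_eq by (rule finsupp_on_diff)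
qed

lemma Dlam_op_pow_in_S_space: "g \<in> S_space a m \<Longrightarrow> (Dlam_op a l ^^ k) g \<in> S_space a m"
  by (induction k) (simp_all add: Dlam_op_in_S_space)

lemma HomD_fps_nth_0:
  assumes "\<phi> \<in> HomD a l m" "g \<in> S_space a m"
  shows "fps_nth (\<phi> g) 0 = specialize_hom \<phi> (\<lambda>u. poly (g u) 0)"
proof -
  let ?c = "\<lambda>u. [:poly (g u) 0:]" and ?q = "\<lambda>u. synthetic_div (g u) 0"
  have decomp: "(\<lambda>u. ?c u + [:0, 1:] * ?q u) = g"
    by (intro ext) (simp add: synthetic_div_correct'[of 0, simplified])
  have c: "?c \<in> S_space a m"
    using assms(2) by (simp add: const_poly_in_S_space_iff poly_at_0_in_S0_space)
  have q: "?q \<in> S_space a m"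
    using assms(2) unfolding S_space_eq by (rule finsupp_on_map) simp
  then have "(\<lambda>u. [:0, 1:] * ?q u) \<in> S_space a m"
    unfolding S_space_eq by (rule finsupp_on_mult_left)
  with c have "\<phi> (\<lambda>u. ?c u + [:0, 1:] * ?q u) = \<phi> ?c + \<phi> (\<lambda>u. [:0, 1:] * ?q u)"
    by (rule HomD_add[OF assms(1)])
  also have "\<phi> (\<lambda>u. [:0, 1:] * ?q u) = fps_X * \<phi> ?q"
    using HomD_mult[OF assms(1) q, of "[:0, 1:]"] by simp
  finally have "\<phi> g = \<phi> ?c + fps_X * \<phi> ?q"
    unfolding decomp .
  then show ?thesis by (simp add: specialize_hom_def)
qed

lemma HomD_Dlam_op_pow:
  assumes "\<phi> \<in> HomD a l m" "g \<in> S_space a m"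
  shows "\<phi> ((Dlam_op a l ^^ k) g) = (fps_deriv ^^ k) (\<phi> g)"
  by (induction k) (simp_all add: HomD_Dlam_op[OF assms(1)] Dlam_op_pow_in_S_space assms(2))

lemma HomD_eq_taylor_series:
  assumes "\<phi> \<in> HomD a l m" "g \<in> S_space a m"
  shows "\<phi> g = taylor_series a l (specialize_hom \<phi>) g"
proof (rule fps_ext)
  fix k
  have "fact k * fps_nth (\<phi> g) k = fps_nth (\<phi> ((Dlam_op a l ^^ k) g)) 0"
    by (simp add: HomD_Dlam_op_pow[OF assms] fps_0th_higher_deriv)
  also have "\<dots> = specialize_hom \<phi> (\<lambda>u. poly ((Dlam_op a l ^^ k) g u) 0)"
    by (rule HomD_fps_nth_0[OF assms(1) Dlam_op_pow_in_S_space[OF assms(2)]])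
  finally show "fps_nth (\<phi> g) k = fps_nth (taylor_series a l (specialize_hom \<phi>) g) k"
    by (simp add: taylor_series_def field_simps)
qed

lemma taylor_hom_specialize_hom:
  assumes "\<phi> \<in> HomD a l m"
  shows "taylor_hom a l m (specialize_hom \<phi>) = \<phi>"
  using HomD_eq_taylor_series[OF assms] HomD_outside[OF assms]
  by (auto simp: taylor_hom_def fun_eq_iff)

lemma specialize_hom_in_HomC0:
  assumes "\<phi> \<in> HomD a l m"
  shows "specialize_hom \<phi> \<in> HomC0 a l m"
  unfolding HomC0_def
proof (intro CollectI conjI allI ballI impI)
  fix g assume "g \<notin> S0_space a m"
  then show "specialize_hom \<phi> g = 0"
    by (simp add: specialize_hom_def HomD_outside[OF assms] const_poly_in_S_space_iff)
next
  fix g h assume "g \<in> S0_space a m" "h \<in> S0_space a m"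
  then show "specialize_hom \<phi> (\<lambda>u. g u + h u) = specialize_hom \<phi> g + specialize_hom \<phi> h"
    using HomD_add[OF assms, of "\<lambda>u. [:g u:]" "\<lambda>u. [:h u:]"]
    by (simp add: specialize_hom_def const_poly_in_S_space_iff)
next
  fix c g assume "g \<in> S0_space a m"
  then show "specialize_hom \<phi> (\<lambda>u. c * g u) = c * specialize_hom \<phi> g"
    using HomD_mult[OF assms, of "\<lambda>u. [:g u:]" "[:c:]"]
    by (simp add: specialize_hom_def const_poly_in_S_space_iff fps_of_poly_const mult.commute)
next
  fix i g assume g: "g \<in> S0_space a m"
  then have lift: "(\<lambda>u. [:g u:]) \<in> S_space a m"
    by (simp add: const_poly_in_S_space_iff)
  have "specialize_hom \<phi> (D0_op a l m i g) = fps_nth (\<phi> (D_op a l m i (\<lambda>u. [:g u:]))) 0"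
    using HomD_fps_nth_0[OF assms D_op_in_S_space[OF lift]] by (simp add: D_op_at_0)
  then show "specialize_hom \<phi> (D0_op a l m i g) = 0"
    by (simp add: HomD_D_op[OF assms lift])
qed

lemma poly_Dlam_op_pow_in_S0_space:
  "g \<in> S_space a m \<Longrightarrow> (\<lambda>u. poly ((Dlam_op a l ^^ k) g u) 0) \<in> S0_space a m"
  by (simp add: Dlam_op_pow_in_S_space poly_at_0_in_S0_space)

context
  fixes \<psi> assumes \<psi>: "\<psi> \<in> HomC0 a l m"
begin

lemma taylor_series_add:
  assumes "g \<in> S_space a m" "h \<in> S_space a m"
  shows "taylor_series a l \<psi> (\<lambda>u. g u + h u) = taylor_series a l \<psi> g + taylor_series a l \<psi> h"
  using HomC0_add[OF \<psi> poly_Dlam_op_pow_in_S0_space[OF assms(1)]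
      poly_Dlam_op_pow_in_S0_space[OF assms(2)]]
  by (simp add: taylor_series_def Dlam_op_pow_add fps_eq_iff add_divide_distrib)

lemma taylor_series_smult:
  assumes "g \<in> S_space a m"
  shows "taylor_series a l \<psi> (\<lambda>u. smult c (g u)) = fps_const c * taylor_series a l \<psi> g"
  using HomC0_mult[OF \<psi> poly_Dlam_op_pow_in_S0_space[OF assms]]
  by (simp add: taylor_series_def Dlam_op_pow_smult fps_eq_iff)

lemma taylor_series_pCons_0:
  assumes "g \<in> S_space a m"
  shows "taylor_series a l \<psi> (\<lambda>u. pCons 0 (g u)) = fps_X * taylor_series a l \<psi> g"
proof (rule fps_ext)
  fix k
  show "fps_nth (taylor_series a l \<psi> (\<lambda>u. pCons 0 (g u))) k = fps_nth (fps_X * taylor_series a l \<psi> g) k"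
  proof (cases k)
    case 0
    then show ?thesis by (simp add: taylor_series_def HomC0_zero[OF \<psi>])
  next
    case (Suc j)
    have "\<psi> (\<lambda>u. poly ((Dlam_op a l ^^ Suc j) (\<lambda>u. pCons 0 (g u)) u) 0)
        = of_nat (Suc j) * \<psi> (\<lambda>u. poly ((Dlam_op a l ^^ j) g u) 0)"
      using HomC0_mult[OF \<psi> poly_Dlam_op_pow_in_S0_space[OF assms]]
      by (simp only: Dlam_op_pow_pCons_0 poly_add poly_pCons poly_smult) simp
    then show ?thesis
      using Suc by (simp add: taylor_series_def field_simps del: of_nat_Suc)
  qed
qed

lemma taylor_series_mult:
  assumes "g \<in> S_space a m"
  shows "taylor_series a l \<psi> (\<lambda>u. p * g u) = fps_of_poly p * taylor_series a l \<psi> g"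
proof (induction p)
  case 0
  show ?case using taylor_series_smult[OF assms, of 0] by simp
next
  case (pCons c q)
  have "(\<lambda>u. q * g u) \<in> S_space a m" "(\<lambda>u. smult c (g u)) \<in> S_space a m"
    "(\<lambda>u. pCons 0 (q * g u)) \<in> S_space a m"
    using assms unfolding S_space_eq by (auto intro: finsupp_on_map)
  then show ?case
    by (simp add: taylor_series_add taylor_series_smult taylor_series_pCons_0 assms pCons.IH
        fps_of_poly_pCons algebra_simps)
qed

lemma taylor_series_D_op:
  assumes "g \<in> S_space a m"
  shows "taylor_series a l \<psi> (D_op a l m i g) = 0"
  using HomC0_D0_op[OF \<psi> poly_Dlam_op_pow_in_S0_space[OF assms]]
  by (simp add: taylor_series_def Dlam_op_pow_D_op_commute D_op_at_0 fps_eq_iff)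

lemma taylor_series_Dlam_op:
  "taylor_series a l \<psi> (Dlam_op a l g) = fps_deriv (taylor_series a l \<psi> g)"
proof (rule fps_ext)
  fix k
  have "(Dlam_op a l ^^ k) (Dlam_op a l g) = (Dlam_op a l ^^ Suc k) g"
    by (simp only: funpow_Suc_right comp_apply)
  then show "fps_nth (taylor_series a l \<psi> (Dlam_op a l g)) k = fps_nth (fps_deriv (taylor_series a l \<psi> g)) k"
    by (simp add: taylor_series_def field_simps del: funpow.simps of_nat_Suc)
qed

lemma taylor_hom_in_HomD: "taylor_hom a l m \<psi> \<in> HomD a l m"
  unfolding HomD_def
proof (intro CollectI conjI allI ballI impI)
  fix g h assume "g \<in> S_space a m" "h \<in> S_space a m"
  moreover then have "(\<lambda>u. g u + h u) \<in> S_space a m"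
    unfolding S_space_eq by (rule finsupp_on_add)
  ultimately show "taylor_hom a l m \<psi> (\<lambda>u. g u + h u) = taylor_hom a l m \<psi> g + taylor_hom a l m \<psi> h"
    by (simp add: taylor_hom_def taylor_series_add)
next
  fix p g assume "g \<in> S_space a m"
  moreover then have "(\<lambda>u. p * g u) \<in> S_space a m"
    unfolding S_space_eq by (rule finsupp_on_mult_left)
  ultimately show "taylor_hom a l m \<psi> (\<lambda>u. p * g u) = fps_of_poly p * taylor_hom a l m \<psi> g"
    by (simp add: taylor_hom_def taylor_series_mult)
qed (simp_all add: taylor_hom_def D_op_in_S_space Dlam_op_in_S_space taylor_series_D_op
       taylor_series_Dlam_op)

lemma specialize_taylor_hom: "specialize_hom (taylor_hom a l m \<psi>) = \<psi>"
  using HomC0_outside[OF \<psi>]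
  by (auto simp: fun_eq_iff specialize_hom_def taylor_hom_def taylor_series_def
      const_poly_in_S_space_iff)

end

end

theorem theorem2p1:
  fixes a :: "nat \<Rightarrow> 'n::finite \<Rightarrow> int" and l :: "nat \<Rightarrow> nat" and m :: nat
  assumes indep: "\<forall>c::nat \<Rightarrow> real.
             (\<forall>i. (\<Sum>j=1..m. c j * real_of_int (a j i)) = 0) \<longrightarrow> (\<forall>j\<in>{1..m}. c j = 0)"
    and lpos: "\<forall>j\<in>{0..m}. 0 < l j"
    and lgcd: "Gcd (l ` {0..m}) = 1"
    and a0: "\<forall>i. int (l 0) * a 0 i = (\<Sum>j=1..m. int (l j) * a j i)"
    and l0: "l 0 = (\<Sum>j=1..m. l j)"
  shows "\<exists>\<Phi>. bij_betw \<Phi> (HomD a l m) (HomC0 a l m) \<and>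
           (\<forall>\<phi>\<in>HomD a l m. \<forall>\<psi>\<in>HomD a l m.
              \<Phi> (\<lambda>g. \<phi> g + \<psi> g) = (\<lambda>g. \<Phi> \<phi> g + \<Phi> \<psi> g)) \<and>
           (\<forall>c. \<forall>\<phi>\<in>HomD a l m. \<Phi> (\<lambda>g. fps_const c * \<phi> g) = (\<lambda>g. c * \<Phi> \<phi> g))"
proof -
  interpret twisted_de_Rham a l m
    using a0_in_lattice_cone[of l a m] lpos a0 by unfold_locales simp
  have "bij_betw specialize_hom (HomD a l m) (HomC0 a l m)"
    by (rule bij_betw_byWitness[where f' = "taylor_hom a l m"])
      (auto simp: taylor_hom_specialize_hom specialize_taylor_hom specialize_hom_in_HomC0
        taylor_hom_in_HomD)
  then show ?thesis
    by (intro exI[of _ specialize_hom]) (simp add: specialize_hom_def fun_eq_iff)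
qed

end
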